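(* Let $V$ be a finite-dimensional complex vector space with a Hermitian inner product, $\mathbf G$ a finite group of unitary transformations of $V$, $\mathbf x_0\in V$ a unit vector with full orbit under $\mathbf G$, and consider the subgroup sequence $\{I\}<\mathbf G_1<\mathbf G$ with coset leader sets $\operatorname{CL}(\mathbf G_1/\{I\})=\mathbf G_1$ and $\operatorname{CL}(\mathbf G/\mathbf G_1)$. Then the subgroup decoding algorithm decodes correctly (with some noise) if and only if every element of $\operatorname{CL}(\mathbf G/\mathbf G_1)$ is minimal.
   Context: Full orbit: $|\mathbf G\mathbf x_0|=|\mathbf G|$. $\operatorname{CL}(\mathbf G/\mathbf G_1)$ is a set of representatives of the left cosets of $\mathbf G_1$ in $\mathbf G$ containing $I$. Subgroup decoding algorithm: given $\mathbf r$, choose $d_1\in\mathbf G_1$ minimizing $\|a\mathbf r-\mathbf x_0\|$ over $a\in\mathbf G_1$, then $d_2\in\operatorname{CL}(\mathbf G/\mathbf G_1)$ minimizing $\|a d_1\mathbf r-\mathbf x_0\|$ (ties broken by a fixed ordering); output $d_2d_1$. It decodes correctly with some noise if there is $\delta>0$ such that for all $g\in\mathbf G$ and $\mathbf r$ with $\|\mathbf r-g^{-1}\mathbf x_0\|<\delta$ the output is $g$. For a subgroup $H$, $\operatorname{FR}(H)=\{\mathbf x:\|\mathbf x-\mathbf x_0\|<\|h\mathbf x-\mathbf x_0\|\ \forall h\in H\setminus\operatorname{Stab}_H(\mathbf x_0)\}$. A coset representative $c$ of $\mathbf G_1$ in $\mathbf G$ is minimal if $\mathbf x_0\in c(\operatorname{FR}(\mathbf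 G_1))$. *)

theory Defs
  imports "HOL-Analysis.Analysis"
begin

text \<open>V is modelled as complex^'n (standard Hermitian norm); transformations as
  complex matrices acting by *v.\<close>

type_synonym 'n cmat = "complex ^ 'n ^ 'n"

definition unitary_mat :: "'n::finite cmat \<Rightarrow> bool" where
  "unitary_mat U \<longleftrightarrow> (\<chi> i j. cnj (U $ j $ i)) ** U = mat 1"

definition matrix_group :: "'n::finite cmat set \<Rightarrow> bool" where
  "matrix_group G \<longleftrightarrow> finite G \<and> mat 1 \<in> G \<and> (\<forall>a\<in>G. \<forall>b\<in>G. a ** b \<in> G)
     \<and> (\<forall>a\<in>G. \<exists>b\<in>G. a ** b = mat 1 \<and> b ** a = mat 1)"

definition full_orbit :: "'n::finite cmat set \<Rightarrow> complex ^ 'n \<Rightarrow> bool" where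
  "full_orbit G x0 \<longleftrightarrow> card ((\<lambda>g. g *v x0) ` G) = card G"

definition left_coset :: "'n::finite cmat \<Rightarrow> 'n cmat set \<Rightarrow> 'n cmat set" where
  "left_coset g H = (\<lambda>h. g ** h) ` H"

definition coset_leaders :: "'n::finite cmat set \<Rightarrow> 'n cmat set \<Rightarrow> 'n cmat set \<Rightarrow> bool" where
  "coset_leaders G H C \<longleftrightarrow> C \<subseteq> G \<and> mat 1 \<in> C \<and> (\<forall>g\<in>G. \<exists>!c. c \<in> C \<and> c \<in> left_coset g H)"

text \<open>Minimizer of f over S, ties broken by the fixed ranking rk (assumed injective).\<close>
definition argmin_tb :: "('a \<Rightarrow> nat) \<Rightarrow> 'a set \<Rightarrow> ('a \<Rightarrow> real) \<Rightarrow> 'a" where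
  "argmin_tb rk S f = (THE a. a \<in> S \<and> (\<forall>b\<in>S. f a < f b \<or> (f a = f b \<and> rk a \<le> rk b)))"

definition subgroup_decode ::
  "('n::finite cmat \<Rightarrow> nat) \<Rightarrow> 'n cmat set \<Rightarrow> 'n cmat set \<Rightarrow> complex ^ 'n \<Rightarrow> complex ^ 'n \<Rightarrow> 'n cmat" where
  "subgroup_decode rk G1 C x0 r =
     (let d1 = argmin_tb rk G1 (\<lambda>a. norm (a *v r - x0));
          d2 = argmin_tb rk C (\<lambda>a. norm ((a ** d1) *v r - x0))
      in d2 ** d1)"

definition decodes_correctly ::
  "('n::finite cmat \<Rightarrow> nat) \<Rightarrow> 'n cmat set \<Rightarrow> 'n cmat set \<Rightarrow> 'n cmat set \<Rightarrow> complex ^ 'n \<Rightarrow> bool" where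
  "decodes_correctly rk G G1 C x0 \<longleftrightarrow>
     (\<exists>\<delta>>0. \<forall>g\<in>G. \<forall>r. norm (r - matrix_inv g *v x0) < \<delta> \<longrightarrow> subgroup_decode rk G1 C x0 r = g)"

definition Stab :: "'n::finite cmat set \<Rightarrow> complex ^ 'n \<Rightarrow> 'n cmat set" where
  "Stab H x0 = {h \<in> H. h *v x0 = x0}"

definition FR :: "'n::finite cmat set \<Rightarrow> complex ^ 'n \<Rightarrow> (complex ^ 'n) set" where
  "FR H x0 = {x. \<forall>h \<in> H - Stab H x0. norm (x - x0) < norm (h *v x - x0)}"

definition minimal_rep :: "'n::finite cmat set \<Rightarrow> complex ^ 'n \<Rightarrow> 'n cmat \<Rightarrow> bool" where
  "minimal_rep G1 x0 c \<longleftrightarrow> x0 \<in> (\<lambda>x. c *v x) ` FR G1 x0"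

end

theory Submission
  imports Defs
begin

(*
  Write y0 = g^-1 x0 and g = c h with c a coset leader and h in G1. The decoder outputs g on a
  neighbourhood of y0 once both stages have strict, hence locally stable, minimisers there: h is the
  strict minimiser of the first stage as soon as h y0 = c^-1 x0 lies in FR(G1), and c is that of the
  second stage because, by fullness of the orbit, (a h) y0 = x0 only for a = c.
  Conversely, if c^-1 x0 is not in FR(G1), some b in G1 - {I} does at least as well as I there.
  Moving c^-1 x0 slightly away from x0 in the direction of b^-1 x0 - x0 makes b strictly better than
  I, so the first stage no longer returns I, although outputting the leader c forces it to.
*)

lemma norm_shift_closer:
  fixes z w x :: "'a::real_inner"
  assumes "norm (z - w) \<le> norm (z - x)" and "w \<noteq> x" and "t > 0"
  shows "norm (z + t *\<^sub>R (w - x) - w) < norm (z + t *\<^sub>R (w - x) - x)"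
proof -
  have shift: "(norm (y + v - w))\<^sup>2 - (norm (y + v - x))\<^sup>2
             = (norm (y - w))\<^sup>2 - (norm (y - x))\<^sup>2 - 2 * inner v (w - x)" for y v
    by (simp add: power2_norm_eq_inner inner_diff inner_add_left inner_add_right
        algebra_simps inner_commute)
  have "inner (t *\<^sub>R (w - x)) (w - x) > 0"
    using assms(2,3) by simp
  moreover have "(norm (z - w))\<^sup>2 \<le> (norm (z - x))\<^sup>2"
    using assms(1) by (simp add: power_mono)
  ultimately have "(norm (z + t *\<^sub>R (w - x) - w))\<^sup>2 < (norm (z + t *\<^sub>R (w - x) - x))\<^sup>2"
    using shift[of z "t *\<^sub>R (w - x)"] by linarith
  then show ?thesis
    by (simp add: power_less_imp_less_base)
qed

lemma eventually_nhds_shift: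
  fixes y :: "'a::real_normed_vector"
  assumes "\<forall>\<^sub>F r in nhds y. P r"
  shows "\<forall>\<^sub>F v in nhds 0. P (y + v)"
proof -
  obtain d where "d > 0" and d: "\<And>r. dist r y < d \<Longrightarrow> P r"
    using assms unfolding eventually_nhds_metric by blast
  have "P (y + v)" if "dist v 0 < d" for v
    using d[of "y + v"] that by (simp add: dist_norm)
  with \<open>d > 0\<close> show ?thesis
    unfolding eventually_nhds_metric by blast
qed

lemma eventually_nhds_finite_uniform_radius:
  fixes y :: "'i \<Rightarrow> 'a::real_normed_vector"
  assumes "finite I" and "\<forall>i\<in>I. \<forall>\<^sub>F r in nhds (y i). P i r"
  shows "\<exists>\<delta>>0. \<forall>i\<in>I. \<forall>r. norm (r - y i) < \<delta> \<longrightarrow> P i r"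
proof -
  have "\<forall>\<^sub>F v in nhds 0. P i (y i + v)" if "i \<in> I" for i
    using eventually_nhds_shift[of "P i" "y i"] assms(2) that by blast
  then have "\<forall>\<^sub>F v in nhds 0. \<forall>i\<in>I. P i (y i + v)"
    by (simp add: eventually_ball_finite_distrib[OF assms(1)])
  then obtain \<delta> where "\<delta> > 0" and \<delta>: "\<And>v i. dist v 0 < \<delta> \<Longrightarrow> i \<in> I \<Longrightarrow> P i (y i + v)"
    unfolding eventually_nhds_metric by blast
  have "P i r" if "i \<in> I" and "norm (r - y i) < \<delta>" for i r
    using \<delta>[of "r - y i" i] that by (simp add: dist_norm)
  with \<open>\<delta> > 0\<close> show ?thesis
    by blast
qed

lemma argmin_tb_eqI:
  assumes "a \<in> S" and "\<And>b. b \<in> S \<Longrightarrow> b \<noteq> a \<Longrightarrow> f a < f b"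
  shows "argmin_tb rk S f = a"
  unfolding argmin_tb_def
proof (rule the_equality)
  show "a \<in> S \<and> (\<forall>b\<in>S. f a < f b \<or> f a = f b \<and> rk a \<le> rk b)"
    using assms by auto
next
  fix a' assume "a' \<in> S \<and> (\<forall>b\<in>S. f a' < f b \<or> f a' = f b \<and> rk a' \<le> rk b)"
  then show "a' = a"
    using assms by (metis less_asym order_less_irrefl)
qed

lemma argmin_tb_in_le:
  assumes "finite S" and "S \<noteq> {}" and "inj_on rk S"
  shows "argmin_tb rk S f \<in> S" and "\<And>b. b \<in> S \<Longrightarrow> f (argmin_tb rk S f) \<le> f b"
proof -
  define P where "P a \<longleftrightarrow> a \<in> S \<and> (\<forall>b\<in>S. f a < f b \<or> (f a = f b \<and> rk a \<le> rk b))" for a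
  obtain m where m: "m \<in> S" "\<And>b. b \<in> S \<Longrightarrow> f m \<le> f b"
    using ex_is_arg_min_if_finite[OF assms(1,2), of f] unfolding is_arg_min_def by force
  define M where "M = {b \<in> S. f b = f m}"
  have "finite M" "M \<noteq> {}"
    using assms(1) m(1) unfolding M_def by auto
  then obtain a where a: "a \<in> M" "\<And>b. b \<in> M \<Longrightarrow> rk a \<le> rk b"
    using ex_is_arg_min_if_finite[of M rk] unfolding is_arg_min_def by force
  have "P a"
    unfolding P_def
  proof (intro conjI ballI)
    show "a \<in> S"
      using a(1) unfolding M_def by simp
    fix b assume "b \<in> S"
    then show "f a < f b \<or> (f a = f b \<and> rk a \<le> rk b)"
      using a m(2)[of b] unfolding M_def by (cases "f b = f m") auto
  qed
  moreover have "a' = a" if "P a'" for a'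
  proof -
    have "f a' < f a \<or> (f a' = f a \<and> rk a' \<le> rk a)" and "f a < f a' \<or> (f a = f a' \<and> rk a \<le> rk a')"
      using that \<open>P a\<close> unfolding P_def by auto
    then have "rk a' = rk a"
      by auto
    then show ?thesis
      using that \<open>P a\<close> assms(3) unfolding P_def by (auto dest: inj_onD)
  qed
  ultimately have "argmin_tb rk S f = a"
    unfolding argmin_tb_def P_def[symmetric] by (rule the_equality)
  then show "argmin_tb rk S f \<in> S" and "\<And>b. b \<in> S \<Longrightarrow> f (argmin_tb rk S f) \<le> f b"
    using \<open>P a\<close> unfolding P_def by force+
qed

lemma eventually_argmin_tb_eq:
  fixes f :: "'a \<Rightarrow> 'b::t2_space \<Rightarrow> real"
  assumes "finite S" and "a \<in> S" and "\<And>b. b \<in> S \<Longrightarrow> isCont (f b) y"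
    and "\<And>b. b \<in> S \<Longrightarrow> b \<noteq> a \<Longrightarrow> f a y < f b y"
  shows "\<forall>\<^sub>F r in nhds y. argmin_tb rk S (\<lambda>b. f b r) = a"
proof -
  have "\<forall>\<^sub>F r in nhds y. 0 < f b r - f a r" if "b \<in> S - {a}" for b
  proof (rule order_tendstoD(1))
    show "((\<lambda>r. f b r - f a r) \<longlongrightarrow> f b y - f a y) (nhds y)"
      using assms(2,3) that
      by (intro tendsto_diff) (auto simp: isCont_def tendsto_at_iff_tendsto_nhds)
    show "0 < f b y - f a y"
      using assms(4) that by simp
  qed
  then have "\<forall>\<^sub>F r in nhds y. \<forall>b\<in>S - {a}. 0 < f b r - f a r"
    by (intro eventually_ball_finite) (use assms(1) in auto)
  then show ?thesis
    by (rule eventually_mono) (auto intro: argmin_tb_eqI[OF assms(2)])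
qed

lemma unitary_mat_norm:
  fixes U :: "'n::finite cmat"
  assumes "unitary_mat U"
  shows "norm (U *v x) = norm x"
proof -
  have orth: "(\<Sum>i\<in>UNIV. cnj (U$i$j) * U$i$k) = (if j = k then 1 else 0)" for j k
    using arg_cong[OF assms[unfolded unitary_mat_def], of "\<lambda>M. M $ j $ k"]
    by (simp add: matrix_matrix_mult_def mat_def)
  have expand: "cnj ((U *v x)$i) * (U *v x)$i
      = (\<Sum>j\<in>UNIV. \<Sum>k\<in>UNIV. cnj (x$j) * x$k * (cnj (U$i$j) * U$i$k))" for i
    by (simp add: matrix_vector_mult_def cnj_sum sum_product mult_ac) (rule sum.swap)
  have "(\<Sum>i\<in>UNIV. cnj ((U *v x)$i) * (U *v x)$i)
      = (\<Sum>j\<in>UNIV. \<Sum>k\<in>UNIV. \<Sum>i\<in>UNIV. cnj (x$j) * x$k * (cnj (U$i$j) * U$i$k))"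
    unfolding expand by (subst sum.swap) (intro sum.cong refl sum.swap)
  also have "\<dots> = (\<Sum>j\<in>UNIV. cnj (x$j) * x$j)"
    by (simp add: sum_distrib_left[symmetric] orth if_distrib cong: if_cong)
  finally have "(\<Sum>i\<in>UNIV. cnj ((U *v x)$i) * (U *v x)$i) = (\<Sum>j\<in>UNIV. cnj (x$j) * x$j)" .
  moreover have "inner v v = Re (\<Sum>i\<in>UNIV. cnj (v$i) * v$i)" for v :: "complex ^ 'n"
    by (simp add: inner_vec_def inner_complex_def)
  ultimately have "inner (U *v x) (U *v x) = inner x x"
    by (simp only:)
  then show ?thesis
    by (simp add: norm_eq_sqrt_inner)
qed

lemma matrix_group_inv:
  assumes "matrix_group G" and "a \<in> G"
  shows "matrix_inv a \<in> G" and "a ** matrix_inv a = mat 1" and "matrix_inv a ** a = mat 1"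
proof -
  obtain b where b: "b \<in> G" "a ** b = mat 1" "b ** a = mat 1"
    using assms unfolding matrix_group_def by blast
  have inv: "a ** matrix_inv a = mat 1 \<and> matrix_inv a ** a = mat 1"
    unfolding matrix_inv_def by (rule someI[of _ b]) (use b in auto)
  have "matrix_inv a = (b ** a) ** matrix_inv a"
    by (simp add: b(3) matrix_mul_lid)
  also have "\<dots> = b"
    using inv by (simp flip: matrix_mul_assoc add: matrix_mul_rid)
  finally have "matrix_inv a = b" .
  then show "matrix_inv a \<in> G" and "a ** matrix_inv a = mat 1" and "matrix_inv a ** a = mat 1"
    using inv b by auto
qed

locale subgroup_decoding =
  fixes G G1 C :: "'n::finite cmat set" and x0 :: "complex ^ 'n" and rk :: "'n cmat \<Rightarrow> nat"
  assumes group: "matrix_group G"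
    and unitary: "\<And>g. g \<in> G \<Longrightarrow> unitary_mat g"
    and orbit: "full_orbit G x0"
    and subgroup: "matrix_group G1" and subset: "G1 \<subseteq> G"
    and leaders: "coset_leaders G G1 C"
    and rk_inj: "inj_on rk G"
begin

abbreviation decode :: "complex ^ 'n \<Rightarrow> 'n cmat" where
  "decode \<equiv> subgroup_decode rk G1 C x0"

lemma finite_G: "finite G" and one_G: "mat 1 \<in> G"
  and mult_G: "a \<in> G \<Longrightarrow> b \<in> G \<Longrightarrow> a ** b \<in> G"
  using group unfolding matrix_group_def by auto

lemma finite_G1: "finite G1" and one_G1: "mat 1 \<in> G1"
  and mult_G1: "a \<in> G1 \<Longrightarrow> b \<in> G1 \<Longrightarrow> a ** b \<in> G1"
  using subgroup unfolding matrix_group_def by auto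

lemmas inv_G = matrix_group_inv[OF group] and inv_G1 = matrix_group_inv[OF subgroup]

lemma leaders_subset: "C \<subseteq> G" and one_C: "mat 1 \<in> C"
  using leaders unfolding coset_leaders_def by auto

lemma finite_C: "finite C"
  using finite_subset[OF leaders_subset finite_G] .

lemma leader_ex1: "g \<in> G \<Longrightarrow> \<exists>!c. c \<in> C \<and> c \<in> left_coset g G1"
  using leaders unfolding coset_leaders_def by blast

lemma mult_left_cancel:
  assumes "c \<in> G" and "c ** a = c ** b"
  shows "a = b"
proof -
  have "a = (matrix_inv c ** c) ** a"
    using assms(1) by (simp add: inv_G matrix_mul_lid)
  also have "\<dots> = (matrix_inv c ** c) ** b"
    using assms(2) by (simp flip: matrix_mul_assoc)
  finally show ?thesis
    using assms(1) by (simp add: inv_G matrix_mul_lid)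
qed

lemma mult_right_cancel:
  assumes "c \<in> G" and "a ** c = b ** c"
  shows "a = b"
proof -
  have "a = a ** (c ** matrix_inv c)"
    using assms(1) by (simp add: inv_G matrix_mul_rid)
  also have "\<dots> = b ** (c ** matrix_inv c)"
    using assms(2) by (simp add: matrix_mul_assoc)
  finally show ?thesis
    using assms(1) by (simp add: inv_G matrix_mul_rid)
qed

lemma mat_vec_eq_x0_iff:
  assumes "c \<in> G"
  shows "c *v z = x0 \<longleftrightarrow> z = matrix_inv c *v x0"
proof
  assume "c *v z = x0"
  then have "matrix_inv c *v x0 = (matrix_inv c ** c) *v z"
    by (simp flip: matrix_vector_mul_assoc)
  then show "z = matrix_inv c *v x0"
    using inv_G(3)[OF assms] by (simp add: matrix_vector_mul_lid)
next
  assume "z = matrix_inv c *v x0"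
  then show "c *v z = x0"
    using inv_G(2)[OF assms] by (simp add: matrix_vector_mul_assoc matrix_vector_mul_lid)
qed

lemma orbit_inj:
  assumes "a \<in> G" and "b \<in> G" and "a *v x0 = b *v x0"
  shows "a = b"
proof -
  have "inj_on (\<lambda>g. g *v x0) G"
    using orbit finite_G unfolding full_orbit_def by (simp add: eq_card_imp_inj_on)
  then show ?thesis
    using assms by (auto dest: inj_onD)
qed

lemma fixes_x0_imp_one:
  assumes "a \<in> G" and "a *v x0 = x0"
  shows "a = mat 1"
  using orbit_inj[OF assms(1) one_G] assms(2) by (simp add: matrix_vector_mul_lid)

lemma maps_inv_orbit_to_x0_iff:
  assumes "a \<in> G" and "b \<in> G"
  shows "a *v (matrix_inv b *v x0) = x0 \<longleftrightarrow> a = b"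
proof
  assume "a *v (matrix_inv b *v x0) = x0"
  then have "a ** matrix_inv b = mat 1"
    using assms inv_G by (intro fixes_x0_imp_one mult_G) (auto simp: matrix_vector_mul_assoc)
  then show "a = b"
    using mult_right_cancel[of "matrix_inv b" a b] assms(2) inv_G by simp
qed (simp add: mat_vec_eq_x0_iff[OF assms(2)])

lemma norm_mat_vec_diff_x0:
  assumes "b \<in> G"
  shows "norm (b *v y - x0) = norm (y - matrix_inv b *v x0)"
proof -
  have "b *v (matrix_inv b *v x0) = x0"
    using mat_vec_eq_x0_iff[OF assms] by blast
  then have "b *v y - x0 = b *v (y - matrix_inv b *v x0)"
    by (simp add: matrix_vector_mult_diff_distrib)
  then show ?thesis
    using unitary_mat_norm[OF unitary[OF assms]] by simp
qed

lemma FR_eq: "FR G1 x0 = {x. \<forall>h \<in> G1 - {mat 1}. norm (x - x0) < norm (h *v x - x0)}"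
proof -
  have "Stab G1 x0 = {mat 1}"
    using fixes_x0_imp_one subset one_G1 unfolding Stab_def by (auto simp: matrix_vector_mul_lid)
  then show ?thesis
    unfolding FR_def by simp
qed

lemma minimal_rep_iff:
  assumes "c \<in> G"
  shows "minimal_rep G1 x0 c \<longleftrightarrow> matrix_inv c *v x0 \<in> FR G1 x0"
proof -
  have "x0 = c *v x \<longleftrightarrow> x = matrix_inv c *v x0" for x
    using mat_vec_eq_x0_iff[OF assms] by metis
  then show ?thesis
    unfolding minimal_rep_def image_iff by auto
qed

lemma leader_decomp:
  assumes "g \<in> G"
  obtains c h where "c \<in> C" and "h \<in> G1" and "g = c ** h"
proof -
  obtain c where "c \<in> C" and "c \<in> left_coset g G1"
    using leader_ex1[OF assms] by blast
  moreover from this(2) obtain h' where "h' \<in> G1" "c = g ** h'"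
    unfolding left_coset_def by blast
  moreover have "g = c ** matrix_inv h'"
    using \<open>h' \<in> G1\<close> \<open>c = g ** h'\<close> by (simp add: inv_G1 matrix_mul_rid flip: matrix_mul_assoc)
  ultimately show ?thesis
    using that inv_G1 by blast
qed

lemma leader_unique:
  assumes "c \<in> C" and "c' \<in> C" and "h \<in> G1" and "c' ** h = c"
  shows "c' = c"
proof -
  have "c' \<in> G"
    using assms(2) leaders_subset by blast
  moreover have "c' \<in> left_coset c' G1"
    using one_G1 unfolding left_coset_def by (force simp: matrix_mul_rid)
  moreover have "c \<in> left_coset c' G1"
    using assms(3,4) unfolding left_coset_def by blast
  ultimately show ?thesis
    using leader_ex1 assms(1,2) by blast
qed

lemma decode_eq_leader_imp_closest:
  assumes "c \<in> C" and "decode r = c" and "b \<in> G1"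
  shows "norm (r - x0) \<le> norm (b *v r - x0)"
proof -
  define d1 where "d1 = argmin_tb rk G1 (\<lambda>a. norm (a *v r - x0))"
  define d2 where "d2 = argmin_tb rk C (\<lambda>a. norm ((a ** d1) *v r - x0))"
  have rk_G1: "inj_on rk G1" and rk_C: "inj_on rk C"
    using rk_inj subset leaders_subset inj_on_subset by blast+
  have "G1 \<noteq> {}" and "C \<noteq> {}"
    using one_G1 one_C by blast+
  note first_stage = argmin_tb_in_le[OF finite_G1 \<open>G1 \<noteq> {}\<close> rk_G1, where f = "\<lambda>a. norm (a *v r - x0)"]
  have d1: "d1 \<in> G1" "norm (d1 *v r - x0) \<le> norm (b *v r - x0)"
    unfolding d1_def by (rule first_stage(1), rule first_stage(2)[OF assms(3)])
  have "d2 \<in> C"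
    unfolding d2_def by (rule argmin_tb_in_le(1)[OF finite_C \<open>C \<noteq> {}\<close> rk_C])
  moreover have "d2 ** d1 = c"
    using assms(2) unfolding subgroup_decode_def d1_def d2_def Let_def by simp
  ultimately have "d2 = c"
    using leader_unique[OF assms(1) _ d1(1)] by blast
  with \<open>d2 ** d1 = c\<close> have "c ** d1 = c ** mat 1"
    by (simp add: matrix_mul_rid)
  then have "d1 = mat 1"
    using assms(1) leaders_subset mult_left_cancel[of c d1 "mat 1"] by blast
  then show ?thesis
    using d1(2) by (simp add: matrix_vector_mul_lid)
qed

lemma minimal_rep_if_eventually_decode:
  assumes "c \<in> C" and decodes: "\<forall>\<^sub>F r in nhds (matrix_inv c *v x0). decode r = c"
  shows "minimal_rep G1 x0 c"
proof -
  have "c \<in> G"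
    using assms(1) leaders_subset by blast
  define z where "z = matrix_inv c *v x0"
  have "z \<in> FR G1 x0"
  proof (rule ccontr)
    assume "z \<notin> FR G1 x0"
    then obtain b where b: "b \<in> G1" "b \<noteq> mat 1" and le: "norm (b *v z - x0) \<le> norm (z - x0)"
      unfolding FR_eq by (auto simp: not_less)
    have "b \<in> G"
      using b(1) subset by blast
    define w where "w = matrix_inv b *v x0"
    have "b *v w = x0"
      unfolding w_def using mat_vec_eq_x0_iff[OF \<open>b \<in> G\<close>] by blast
    then have "w \<noteq> x0"
      using b(2) fixes_x0_imp_one[OF \<open>b \<in> G\<close>] by auto
    have dist_b: "norm (b *v y - x0) = norm (y - w)" for y
      unfolding w_def by (rule norm_mat_vec_diff_x0[OF \<open>b \<in> G\<close>])
    have "((\<lambda>t. z + t *\<^sub>R (w - x0)) \<longlongrightarrow> z) (at_right 0)"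
      by (auto intro!: tendsto_eq_intros)
    then have "\<forall>\<^sub>F t in at_right 0. decode (z + t *\<^sub>R (w - x0)) = c"
      by (rule eventually_compose_filterlim[OF decodes[folded z_def]])
    then have "\<forall>\<^sub>F t in at_right 0. 0 < t \<and> decode (z + t *\<^sub>R (w - x0)) = c"
      by (rule eventually_conj[OF eventually_at_right_less])
    then obtain t where "t > 0" and "decode (z + t *\<^sub>R (w - x0)) = c"
      using eventually_happens'[OF trivial_limit_at_right_real] by blast
    then have "norm (z + t *\<^sub>R (w - x0) - x0) \<le> norm (z + t *\<^sub>R (w - x0) - w)"
      using decode_eq_leader_imp_closest[OF assms(1) _ b(1)] dist_b by simp
    moreover have "norm (z + t *\<^sub>R (w - x0) - w) < norm (z + t *\<^sub>R (w - x0) - x0)"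
      using norm_shift_closer[OF _ \<open>w \<noteq> x0\<close> \<open>t > 0\<close>] le dist_b by simp
    ultimately show False
      by simp
  qed
  then show ?thesis
    unfolding z_def by (simp add: minimal_rep_iff[OF \<open>c \<in> G\<close>])
qed

lemma FR_imp_strict_nearest:
  assumes "h \<in> G1" and FR: "h *v y \<in> FR G1 x0" and "a \<in> G1" and "a \<noteq> h"
  shows "norm (h *v y - x0) < norm (a *v y - x0)"
proof -
  have "h \<in> G"
    using assms(1) subset by blast
  define b where "b = a ** matrix_inv h"
  have "b \<in> G1"
    unfolding b_def using \<open>a \<in> G1\<close> \<open>h \<in> G1\<close> by (simp add: mult_G1 inv_G1)
  moreover have "b \<noteq> mat 1"
  proof
    assume "b = mat 1"
    then have "a ** matrix_inv h = h ** matrix_inv h"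
      unfolding b_def using \<open>h \<in> G\<close> by (simp add: inv_G)
    then show False
      using \<open>a \<noteq> h\<close> \<open>h \<in> G\<close> inv_G(1) mult_right_cancel[of "matrix_inv h" a h] by blast
  qed
  ultimately have "norm (h *v y - x0) < norm (b *v (h *v y) - x0)"
    using FR unfolding FR_eq by blast
  moreover have "b *v (h *v y) = a *v y"
    unfolding b_def using \<open>h \<in> G\<close>
    by (simp add: matrix_vector_mul_assoc inv_G matrix_mul_rid flip: matrix_mul_assoc)
  ultimately show ?thesis
    by simp
qed

lemma eventually_decode_if_minimal_reps:
  assumes minimal: "\<forall>c\<in>C. minimal_rep G1 x0 c" and "g \<in> G"
  shows "\<forall>\<^sub>F r in nhds (matrix_inv g *v x0). decode r = g"
proof -
  obtain c h where "c \<in> C" and "h \<in> G1" and g: "g = c ** h"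
    using leader_decomp[OF \<open>g \<in> G\<close>] .
  have "c \<in> G" and "h \<in> G"
    using \<open>c \<in> C\<close> \<open>h \<in> G1\<close> leaders_subset subset by blast+
  define y0 where "y0 = matrix_inv g *v x0"
  have "g *v y0 = x0"
    unfolding y0_def using maps_inv_orbit_to_x0_iff[OF \<open>g \<in> G\<close> \<open>g \<in> G\<close>] by blast
  then have "c *v (h *v y0) = x0"
    unfolding g by (simp add: matrix_vector_mul_assoc)
  then have FR: "h *v y0 \<in> FR G1 x0"
    using minimal \<open>c \<in> C\<close> minimal_rep_iff[OF \<open>c \<in> G\<close>] mat_vec_eq_x0_iff[OF \<open>c \<in> G\<close>] by auto
  have cont: "isCont (\<lambda>r. norm (M *v r - x0)) y0" for M :: "'n cmat"
    by (intro continuous_intros matrix_vector_mult_linear_continuous_at)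
  have first_stage: "\<forall>\<^sub>F r in nhds y0. argmin_tb rk G1 (\<lambda>a. norm (a *v r - x0)) = h"
    using FR_imp_strict_nearest[OF \<open>h \<in> G1\<close> FR]
    by (rule eventually_argmin_tb_eq[OF finite_G1 \<open>h \<in> G1\<close> cont])
  have second_stage: "\<forall>\<^sub>F r in nhds y0. argmin_tb rk C (\<lambda>a. norm ((a ** h) *v r - x0)) = c"
  proof (rule eventually_argmin_tb_eq[OF finite_C \<open>c \<in> C\<close> cont])
    fix a assume "a \<in> C" "a \<noteq> c"
    then have "a ** h \<noteq> g"
      using \<open>h \<in> G\<close> mult_right_cancel[of h a c] unfolding g by blast
    moreover have "a ** h \<in> G"
      using \<open>a \<in> C\<close> \<open>h \<in> G\<close> leaders_subset mult_G by blast
    ultimately have "(a ** h) *v y0 \<noteq> x0"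
      unfolding y0_def using maps_inv_orbit_to_x0_iff \<open>g \<in> G\<close> by blast
    moreover have "(c ** h) *v y0 = x0"
      using \<open>g *v y0 = x0\<close> unfolding g .
    ultimately show "norm ((c ** h) *v y0 - x0) < norm ((a ** h) *v y0 - x0)"
      by simp
  qed
  show ?thesis
    using eventually_conj[OF first_stage second_stage] unfolding y0_def[symmetric]
    by (rule eventually_mono) (simp add: subgroup_decode_def g)
qed

lemma decodes_correctly_iff_eventually:
  "decodes_correctly rk G G1 C x0 \<longleftrightarrow> (\<forall>g\<in>G. \<forall>\<^sub>F r in nhds (matrix_inv g *v x0). decode r = g)"
proof
  assume "decodes_correctly rk G G1 C x0"
  then show "\<forall>g\<in>G. \<forall>\<^sub>F r in nhds (matrix_inv g *v x0). decode r = g"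
    unfolding decodes_correctly_def eventually_nhds_metric dist_norm by blast
next
  assume "\<forall>g\<in>G. \<forall>\<^sub>F r in nhds (matrix_inv g *v x0). decode r = g"
  then show "decodes_correctly rk G G1 C x0"
    unfolding decodes_correctly_def by (rule eventually_nhds_finite_uniform_radius[OF finite_G])
qed

theorem decodes_correctly_iff_minimal_reps:
  "decodes_correctly rk G G1 C x0 \<longleftrightarrow> (\<forall>c\<in>C. minimal_rep G1 x0 c)"
  unfolding decodes_correctly_iff_eventually
  using minimal_rep_if_eventually_decode eventually_decode_if_minimal_reps leaders_subset by blast

end

theorem mainTheorem11:
  fixes G G1 C :: "'n::finite cmat set" and x0 :: "complex ^ 'n" and rk :: "'n cmat \<Rightarrow> nat"
  assumes "matrix_group G" and "\<forall>g\<in>G. unitary_mat g"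
    and "norm x0 = 1" and "full_orbit G x0"
    and "matrix_group G1" and "G1 \<subseteq> G"
    and "coset_leaders G G1 C"
    and "inj_on rk G"
  shows "decodes_correctly rk G G1 C x0 \<longleftrightarrow> (\<forall>c\<in>C. minimal_rep G1 x0 c)"
proof -
  interpret subgroup_decoding G G1 C x0 rk
    using assms by unfold_locales auto
  show ?thesis
    by (rule decodes_correctly_iff_minimal_reps)
qed

end
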